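(* Let $\mathcal X$ be a separable metric space with at least two points. Let $\varepsilon\in[0,1)$ and let $T$ be a test (a map from $\Delta^*$ to the open subsets of $\Omega$) such that $P(T(P))\le\varepsilon$ for every $P\in\Delta^*$. Then for every $\delta\in(0,1-\varepsilon]$ there exists a probability measure $\zeta$ on $\Delta^*$ with finite support such that $\zeta(\{P\in\Delta^*:\omega\notin T(P)\})\ge1-\varepsilon-\delta$ for every $\omega\in\Omega$.
   Context: $\Omega=\mathcal X^{\mathbb N}$ with the product topology; for $\omega\in\Omega$, $t\ge0$, $\omega^t$ is the cylinder of paths agreeing with $\omega$ in the first $t$ coordinates ($\omega^0=\Omega$); $\mathcal H$ is the set of all cylinders. $\Sigma$ is a $\sigma$-algebra on $\Omega$ containing all open sets; $\mathbb P$ is the set of finitely additive probabilities on $(\Omega,\Sigma)$; $P\in\mathbb P$ is strongly nonatomic if for every $E\in\Sigma$, $\alpha\in[0,1]$ there is $F\in\Sigma$, $F\subseteq E$, with $P(F)=\alpha P(E)$. A conditional probability is a function $P:\Sigma\times\mathcal H\to[0,1]$ such that for every $t\ge0$ and $\omega$: (1) $P(\cdot\mid\omega^t)\in\mathbb P$; (2) $P(\omega^t\mid\omega^t)=1$; (3) $P(E\cap\omega^{t+n}\mid\omega^t)=P(E\mid\omega^{t+n})P(\omega^{t+n}\mid\omega^t)$ for all $E\in\Sigma$, $n\ge0$. It is a conditional opinion if $P(\cdot\mid\Omega)$ is strongly nonatomic; $\Delta^*$ is the set of conditional opinions. We write $P(E)$ for $P(E\mid\Omega)$. *)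

theory Defs
  imports "HOL-Analysis.Analysis" "HOL-Probability.Probability"
begin

text \<open>Paths: Omega = X^N is the type nat => 'x, carrying the product topology
  (the library instance of topological_space on function types).\<close>

definition cyl :: "(nat \<Rightarrow> 'x) \<Rightarrow> nat \<Rightarrow> (nat \<Rightarrow> 'x) set" where
  "cyl \<omega> t = {\<omega>'. \<forall>i<t. \<omega>' i = \<omega> i}"

definition cylinders :: "(nat \<Rightarrow> 'x) set set" where
  "cylinders = {cyl \<omega> t | \<omega> t. True}"

definition admissible_sigma :: "(nat \<Rightarrow> 'x::topological_space) set set \<Rightarrow> bool" where
  "admissible_sigma \<Sigma> \<longleftrightarrow> sigma_algebra UNIV \<Sigma> \<and> (\<forall>U. open U \<longrightarrow> U \<in> \<Sigma>)"

definition fa_prob :: "'a set set \<Rightarrow> ('a set \<Rightarrow> real) \<Rightarrow> bool" where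
  "fa_prob \<Sigma> P \<longleftrightarrow> (\<forall>E\<in>\<Sigma>. P E \<ge> 0) \<and> P UNIV = 1 \<and>
     (\<forall>A\<in>\<Sigma>. \<forall>B\<in>\<Sigma>. A \<inter> B = {} \<longrightarrow> P (A \<union> B) = P A + P B)"

definition strongly_nonatomic :: "'a set set \<Rightarrow> ('a set \<Rightarrow> real) \<Rightarrow> bool" where
  "strongly_nonatomic \<Sigma> P \<longleftrightarrow>
     (\<forall>E\<in>\<Sigma>. \<forall>\<alpha>::real. 0 \<le> \<alpha> \<and> \<alpha> \<le> 1 \<longrightarrow> (\<exists>F\<in>\<Sigma>. F \<subseteq> E \<and> P F = \<alpha> * P E))"

text \<open>A conditional probability P : Sigma x H -> [0,1], represented as a function
  P E H (E the event, H the conditioning cylinder). To have a unique representative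
  for each such map, values outside Sigma x H are fixed to 0.\<close>
definition cond_prob ::
  "(nat \<Rightarrow> 'x) set set \<Rightarrow> ((nat \<Rightarrow> 'x) set \<Rightarrow> (nat \<Rightarrow> 'x) set \<Rightarrow> real) \<Rightarrow> bool" where
  "cond_prob \<Sigma> P \<longleftrightarrow>
     (\<forall>E H. (E \<in> \<Sigma> \<and> H \<in> cylinders) \<longrightarrow> 0 \<le> P E H \<and> P E H \<le> 1) \<and>
     (\<forall>E H. \<not> (E \<in> \<Sigma> \<and> H \<in> cylinders) \<longrightarrow> P E H = 0) \<and>
     (\<forall>\<omega> t. fa_prob \<Sigma> (\<lambda>E. P E (cyl \<omega> t)) \<and>
        P (cyl \<omega> t) (cyl \<omega> t) = 1 \<and>
        (\<forall>E\<in>\<Sigma>. \<forall>n. P (E \<inter> cyl \<omega> (t + n)) (cyl \<omega> t) =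
                      P E (cyl \<omega> (t + n)) * P (cyl \<omega> (t + n)) (cyl \<omega> t)))"

definition cond_opinions ::
  "(nat \<Rightarrow> 'x) set set \<Rightarrow> ((nat \<Rightarrow> 'x) set \<Rightarrow> (nat \<Rightarrow> 'x) set \<Rightarrow> real) set" where
  "cond_opinions \<Sigma> = {P. cond_prob \<Sigma> P \<and> strongly_nonatomic \<Sigma> (\<lambda>E. P E UNIV)}"

end

theory Submission
  imports Defs
begin

text \<open>
  Suppose the conclusion fails for some \<delta>, and put c = \<epsilon> + \<delta> and
  d = \<epsilon> + \<delta>/2.  Then every finitely supported mixture of conditional opinions is
  beaten by some path \<omega> lying in more than a c-fraction (by weight) of the rejection
  regions T P.  A multiplicative-weights argument turns this into finitely many paths
  \<omega>_0, ..., \<omega>_(R-1) such that every P in a given finite set S has at least d*R of them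
  in T P.  Averaging finitely additive "point charges" at these paths gives a charge
  Q with Q (T P) \<ge> d for all P in S, because the T P are open.  An ultrafilter limit
  over the finite subsets of \<Delta>* gives a single charge P0 with P0 (T P) \<ge> d for every
  P in \<Delta>*.  Finally P0 is extended to a conditional opinion Ps with unconditional
  part P0; then Ps (T Ps) \<ge> d > \<epsilon>, contradicting the level of the test.

  The point charges are ultrafilter limits of uniform distributions on paths that
  agree with the given path on a long prefix and carry a "marker" further out; the
  markers make every such charge strongly nonatomic, which is why \<X> needs two points.
\<close>

section \<open>Ultrafilters\<close>

definition ultra :: "'a filter \<Rightarrow> bool" where
  "ultra F \<longleftrightarrow> F \<noteq> bot \<and> (\<forall>P. eventually P F \<or> eventually (\<lambda>x. \<not> P x) F)"

lemma ultra_nbot: "ultra U \<Longrightarrow> U \<noteq> bot"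
  by (simp add: ultra_def)

lemma max_filter_is_ultra:
  assumes Fnb: "F \<noteq> bot"
  assumes max: "\<And>G. G \<noteq> bot \<Longrightarrow> G \<le> F \<Longrightarrow> F = G"
  shows "ultra F"
proof -
  have "eventually P F \<or> eventually (\<lambda>x. \<not> P x) F" for P
  proof (cases "eventually (\<lambda>x. \<not> P x) F")
    case False
    then have "inf F (principal {x. P x}) \<noteq> bot"
      unfolding trivial_limit_def eventually_inf_principal by simp
    then have F: "F = inf F (principal {x. P x})"
      by (rule max) simp
    have "eventually P (inf F (principal {x. P x}))"
      by (simp add: eventually_inf_principal)
    then show ?thesis using F by simp
  qed simp
  then show ?thesis using Fnb by (simp add: ultra_def)
qed

text \<open>A nonempty chain of proper filters is directed, so its infimum is trivial only if
  one of its members is.\<close>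
lemma Inf_chain_proper:
  fixes C :: "'a filter set"
  assumes ne: "C \<noteq> {}" and proper: "bot \<notin> C"
    and chain: "\<And>G H. G \<in> C \<Longrightarrow> H \<in> C \<Longrightarrow> G \<le> H \<or> H \<le> G"
  shows "Inf C \<noteq> bot"
proof -
  have "eventually (\<lambda>_. False) (Inf C) \<longleftrightarrow> (\<exists>G\<in>C. eventually (\<lambda>_. False) G)"
  proof (rule eventually_Inf_base[OF ne])
    fix G H assume "G \<in> C" "H \<in> C"
    then show "\<exists>K\<in>C. K \<le> inf G H" using chain[of G H] by (auto simp: inf_absorb1 inf_absorb2)
  qed
  then show ?thesis using proper by (auto simp: eventually_False)
qed

text \<open>Every proper filter is refined by an ultrafilter: by Zorn's lemma there is a
  minimal proper filter below it, and minimal proper filters are ultrafilters.\<close>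
lemma ultra_exists:
  fixes F :: "'a filter"
  assumes F: "F \<noteq> bot"
  shows "\<exists>U\<le>F. ultra U"
proof -
  define R where "R = {(G, H). H \<noteq> bot \<and> H \<le> G \<and> G \<le> F}"
  have field: "Field R = {G. G \<noteq> bot \<and> G \<le> F}"
    by (auto simp: R_def Field_def bot_unique)
  have "Partial_order R"
    by (auto simp: R_def partial_order_on_def preorder_on_def
        antisym_def refl_on_def trans_def Field_def bot_unique)
  moreover have "\<exists>u\<in>Field R. \<forall>G\<in>C. (G, u) \<in> R" if C: "C \<in> Chains R" for C
  proof (cases "C = {}")
    case True
    then show ?thesis using F by (auto simp: field)
  next
    case False
    have C_proper: "G \<noteq> bot" "G \<le> F" if "G \<in> C" for G
      using C that by (auto simp: Chains_def R_def)
    have chain: "G \<le> H \<or> H \<le> G" if "G \<in> C" "H \<in> C" for G H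
      using C that by (auto simp: Chains_def R_def)
    have "bot \<notin> C" using C_proper(1) by blast
    then have "Inf C \<noteq> bot" by (rule Inf_chain_proper[OF False _ chain])
    moreover have "Inf C \<le> F" using False C_proper(2) by (meson Inf_lower2 ex_in_conv)
    ultimately show ?thesis
      using C_proper unfolding field by (intro bexI[of _ "Inf C"]) (auto simp: R_def Inf_lower)
  qed
  ultimately obtain U where U: "U \<in> Field R" "\<And>G. G \<in> Field R \<Longrightarrow> (U, G) \<in> R \<Longrightarrow> G = U"
    using Zorns_po_lemma[of R] by blast
  have U_proper: "U \<noteq> bot" "U \<le> F" using U(1) by (auto simp: field)
  have "ultra U"
  proof (rule max_filter_is_ultra[OF U_proper(1)])
    fix G assume G: "G \<noteq> bot" "G \<le> U"
    then have "G \<in> Field R" using U_proper(2) by (auto simp: field intro: order_trans)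
    moreover have "(U, G) \<in> R" using G U_proper(2) by (simp add: R_def)
    ultimately have "G = U" by (rule U(2))
    then show "U = G" ..
  qed
  with U_proper(2) show ?thesis by blast
qed

text \<open>Along an ultrafilter every bounded real function converges (compactness of [0,1]).\<close>
lemma ultra_tendsto:
  fixes f :: "'a \<Rightarrow> real"
  assumes U: "ultra U" and f: "\<And>x. f x \<in> {0..1}"
  shows "(f \<longlongrightarrow> Lim U f) U"
proof -
  let ?G = "filtermap f U"
  have "?G \<noteq> bot" using ultra_nbot[OF U] by (simp add: filtermap_bot_iff)
  moreover have "eventually (\<lambda>x. x \<in> {0..1::real}) ?G"
    using f by (simp add: eventually_filtermap)
  ultimately have "\<exists>L\<in>{0..1::real}. inf (nhds L) ?G \<noteq> bot"
    using compact_filter[THEN iffD1, OF compact_Icc[of "0::real" 1], rule_format] by simp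
  then obtain L where L: "inf (nhds L) ?G \<noteq> bot" by auto
  have "(f \<longlongrightarrow> L) U"
  proof (rule topological_tendstoI)
    fix S assume S: "open S" "L \<in> S"
    show "eventually (\<lambda>x. f x \<in> S) U"
    proof (rule ccontr)
      assume "\<not> eventually (\<lambda>x. f x \<in> S) U"
      then have "eventually (\<lambda>y. y \<notin> S) ?G" using U by (auto simp: ultra_def eventually_filtermap)
      moreover have "eventually (\<lambda>y. y \<in> S) (nhds L)" using S by (rule eventually_nhds_in_open)
      ultimately have "eventually (\<lambda>y. False) (inf (nhds L) ?G)"
        unfolding eventually_inf by blast
      with L show False by (simp add: trivial_limit_def)
    qed
  qed
  then show ?thesis using ultra_nbot[OF U] by (simp add: tendsto_Lim)
qed

lemma Lim_eqI: "ultra U \<Longrightarrow> (f \<longlongrightarrow> c) U \<Longrightarrow> Lim U f = c"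
  by (rule tendsto_Lim) (simp_all add: ultra_def)

section \<open>Multiplicative weights\<close>

text \<open>The numerical heart of the hedging argument: with \<beta> halfway between d/c and 1,
  one round shrinks the total weight by q = 1 - (1 - \<beta>) c, while a weight that has
  been hit in at most a d-fraction of the rounds decays only like \<beta>^d per round, and
  q < \<beta>^d.\<close>
lemma key_ineq:
  fixes c d :: real
  assumes d0: "0 \<le> d" and dc: "d < c" and c1: "c \<le> 1"
  defines "\<beta> \<equiv> (1 + d / c) / 2"
  shows "0 < \<beta>" "\<beta> < 1" "1 - (1 - \<beta>) * c < \<beta> powr d" "0 < 1 - (1 - \<beta>) * c"
proof -
  have c0: "0 < c" using d0 dc by simp
  have dc1: "d / c < 1" using dc c0 by simp
  have dc0: "0 \<le> d / c" using d0 c0 by simp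
  show b0: "0 < \<beta>" unfolding \<beta>_def using dc0 by simp
  show b1: "\<beta> < 1" unfolding \<beta>_def using dc1 by simp
  have cb: "d < c * \<beta>" unfolding \<beta>_def using c0 dc by (simp add: field_simps)
  have lnb: "1 - 1 / \<beta> \<le> ln \<beta>"
    using ln_le_minus_one[of "1 / \<beta>"] b0 by (simp add: ln_div)
  have "1 + d * (1 - 1 / \<beta>) \<le> 1 + d * ln \<beta>"
    using lnb d0 by (simp add: mult_left_mono)
  also have "\<dots> \<le> exp (d * ln \<beta>)" by (rule exp_ge_add_one_self)
  also have "\<dots> = \<beta> powr d" using b0 by (simp add: powr_def mult.commute)
  finally have A: "1 + d * (1 - 1 / \<beta>) \<le> \<beta> powr d" .
  have "d * (1 / \<beta> - 1) = d * (1 - \<beta>) / \<beta>" using b0 by (simp add: field_simps)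
  also have "\<dots> < c * \<beta> * (1 - \<beta>) / \<beta>"
    using cb b0 b1 by (intro divide_strict_right_mono mult_strict_right_mono) auto
  also have "\<dots> = c * (1 - \<beta>)" using b0 by simp
  finally show "1 - (1 - \<beta>) * c < \<beta> powr d" using A by (simp add: algebra_simps)
  have "(1 - \<beta>) * c \<le> (1 - \<beta>) * 1" using b1 c1 by (intro mult_left_mono) auto
  then show "0 < 1 - (1 - \<beta>) * c" using b0 by simp
qed

lemma weight_update:
  fixes S :: "'p set" and L :: "'p \<Rightarrow> nat" and \<beta> c :: real
  assumes S: "finite S" and \<beta>: "0 < \<beta>" "\<beta> < 1"
    and heavy: "c * (\<Sum>P\<in>S. \<beta> ^ L P) < (\<Sum>P\<in>{P\<in>S. \<omega> \<in> T P}. \<beta> ^ L P)"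
  shows "(\<Sum>P\<in>S. \<beta> ^ (L P + (if \<omega> \<in> T P then 1 else 0)))
           \<le> (1 - (1 - \<beta>) * c) * (\<Sum>P\<in>S. \<beta> ^ L P)"
proof -
  have "(\<Sum>P\<in>S. \<beta> ^ (L P + (if \<omega> \<in> T P then 1 else 0)))
      = (\<Sum>P\<in>S. \<beta> ^ L P - (1 - \<beta>) * (if \<omega> \<in> T P then \<beta> ^ L P else 0))"
    by (intro sum.cong refl) (simp add: algebra_simps)
  also have "\<dots> = (\<Sum>P\<in>S. \<beta> ^ L P) - (1 - \<beta>) * (\<Sum>P\<in>{P\<in>S. \<omega> \<in> T P}. \<beta> ^ L P)"
    by (simp add: sum_subtractf sum_distrib_left sum.inter_filter[OF S])
  also have "\<dots> \<le> (\<Sum>P\<in>S. \<beta> ^ L P) - (1 - \<beta>) * (c * (\<Sum>P\<in>S. \<beta> ^ L P))"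
    using heavy \<beta> by (intro diff_left_mono mult_left_mono) auto
  also have "\<dots> = (1 - (1 - \<beta>) * c) * (\<Sum>P\<in>S. \<beta> ^ L P)" by (simp add: algebra_simps)
  finally show ?thesis .
qed

lemma multiplicative_weights:
  fixes S :: "'p set" and T :: "'p \<Rightarrow> 'w set" and \<beta> c :: real
  assumes S: "finite S" and \<beta>: "0 < \<beta>" "\<beta> < 1" and c1: "c \<le> 1"
    and step: "\<And>w. (\<forall>P\<in>S. 0 < w P) \<Longrightarrow> \<exists>\<omega>. c * (\<Sum>P\<in>S. w P) < (\<Sum>P\<in>{P\<in>S. \<omega> \<in> T P}. w P)"
  shows "\<exists>om :: nat \<Rightarrow> 'w. \<forall>R. (\<Sum>P\<in>S. \<beta> ^ card {r. r < R \<and> om r \<in> T P})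
                                 \<le> real (card S) * (1 - (1 - \<beta>) * c) ^ R"
proof -
  define q where "q = 1 - (1 - \<beta>) * c"
  have "(1 - \<beta>) * c \<le> 1"
  proof (cases "0 \<le> c")
    case True
    then have "(1 - \<beta>) * c \<le> c" using \<beta> by (intro mult_left_le_one_le) auto
    then show ?thesis using c1 by simp
  next
    case False
    then show ?thesis using \<beta> by (simp add: mult_nonneg_nonpos order_trans[of _ 0 1])
  qed
  then have q0: "0 \<le> q" unfolding q_def by simp
  have "\<forall>L :: 'p \<Rightarrow> nat. \<exists>\<omega>. c * (\<Sum>P\<in>S. \<beta> ^ L P) < (\<Sum>P\<in>{P\<in>S. \<omega> \<in> T P}. \<beta> ^ L P)"
    using step \<beta> by simp
  then obtain pick where pick:
    "\<And>L. c * (\<Sum>P\<in>S. \<beta> ^ L P) < (\<Sum>P\<in>{P\<in>S. pick L \<in> T P}. \<beta> ^ L P)"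
    by metis
  define L where "L = rec_nat (\<lambda>P. 0) (\<lambda>_ Lr P. Lr P + (if pick Lr \<in> T P then 1 else 0 :: nat))"
  define om where "om r = pick (L r)" for r
  have L0: "L 0 P = 0" and Lsuc: "L (Suc r) P = L r P + (if om r \<in> T P then 1 else 0)" for r P
    by (simp_all add: L_def om_def)
  have Lcard: "L r P = card {j. j < r \<and> om j \<in> T P}" for r P
  proof (induction r)
    case (Suc r)
    have "{j. j < Suc r \<and> om j \<in> T P} = {j. j < r \<and> om j \<in> T P} \<union> (if om r \<in> T P then {r} else {})"
      by (auto simp: less_Suc_eq)
    then show ?case using Suc by (simp add: Lsuc card_insert_if)
  qed (simp add: L0)
  have "(\<Sum>P\<in>S. \<beta> ^ L R P) \<le> real (card S) * q ^ R" for R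
  proof (induction R)
    case (Suc R)
    have "(\<Sum>P\<in>S. \<beta> ^ L (Suc R) P) \<le> q * (\<Sum>P\<in>S. \<beta> ^ L R P)"
      using weight_update[OF S \<beta> pick[of "L R"]] by (simp add: Lsuc om_def q_def)
    also have "\<dots> \<le> q * (real (card S) * q ^ R)" using Suc q0 by (intro mult_left_mono)
    finally show ?case by (simp add: algebra_simps)
  qed (simp add: L0)
  then have "\<forall>R. (\<Sum>P\<in>S. \<beta> ^ card {r. r < R \<and> om r \<in> T P}) \<le> real (card S) * q ^ R"
    by (simp add: Lcard)
  then show ?thesis unfolding q_def by (rule exI[of _ om])
qed

lemma hedge:
  fixes S :: "'p set" and T :: "'p \<Rightarrow> 'w set" and c d :: real
  assumes S: "finite S" "S \<noteq> {}"
    and d0: "0 \<le> d" and dc: "d < c" and c1: "c \<le> 1"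
    and step: "\<And>w. (\<forall>P\<in>S. 0 < w P) \<Longrightarrow> \<exists>\<omega>. c * (\<Sum>P\<in>S. w P) < (\<Sum>P\<in>{P\<in>S. \<omega> \<in> T P}. w P)"
  shows "\<exists>R>0. \<exists>om :: nat \<Rightarrow> 'w. \<forall>P\<in>S. d * real R \<le> real (card {r. r < R \<and> om r \<in> T P})"
proof -
  define \<beta> where "\<beta> = (1 + d / c) / 2"
  note ki = key_ineq[OF d0 dc c1, folded \<beta>_def]
  define q where "q = 1 - (1 - \<beta>) * c"
  obtain om :: "nat \<Rightarrow> 'w" where om:
    "\<And>R. (\<Sum>P\<in>S. \<beta> ^ card {r. r < R \<and> om r \<in> T P}) \<le> real (card S) * q ^ R"
    using multiplicative_weights[OF S(1) ki(1,2) c1 step] unfolding q_def by blast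
  define \<rho> where "\<rho> = q / \<beta> powr d"
  have \<rho>: "0 \<le> \<rho>" "\<rho> < 1"
    using ki(1,3,4) unfolding \<rho>_def q_def by (auto simp: divide_less_eq)
  have "eventually (\<lambda>R. \<rho> ^ R < 1 / real (card S)) sequentially"
    using LIMSEQ_power_zero[of \<rho>] \<rho> S by (intro order_tendstoD(2)) (auto simp: card_gt_0_iff)
  then obtain R where R: "R > 0" "\<rho> ^ R < 1 / real (card S)"
    using eventually_conj[OF _ eventually_gt_at_top[of 0]] eventually_sequentially
    by (metis (no_types, lifting) le_refl)
  have "d * real R \<le> real (card {r. r < R \<and> om r \<in> T P})" if P: "P \<in> S" for P
  proof (rule ccontr)
    assume "\<not> ?thesis"
    then have "(\<beta> powr d) ^ R \<le> \<beta> ^ card {r. r < R \<and> om r \<in> T P}"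
      using ki(1,2) by (simp add: powr_realpow[symmetric] powr_powr powr_mono')
    also have "\<dots> \<le> (\<Sum>P\<in>S. \<beta> ^ card {r. r < R \<and> om r \<in> T P})"
      using S(1) P ki(1) by (intro member_le_sum) auto
    also have "\<dots> \<le> real (card S) * q ^ R" by (rule om)
    finally have "1 \<le> real (card S) * \<rho> ^ R"
      using ki(1) by (simp add: \<rho>_def field_simps)
    moreover have "real (card S) * \<rho> ^ R < 1" using R(2) S by (simp add: card_gt_0_iff field_simps)
    ultimately show False by simp
  qed
  then show ?thesis using R(1) by blast
qed

section \<open>Finitely supported mixtures\<close>

lemma weighted_pmf:
  fixes S :: "'a set" and w :: "'a \<Rightarrow> real"
  assumes S: "finite S" "S \<noteq> {}" and w: "\<forall>x\<in>S. 0 < w x"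
  shows "\<exists>\<zeta>. set_pmf \<zeta> = S \<and> (\<forall>A. measure_pmf.prob \<zeta> A = (\<Sum>x\<in>S \<inter> A. w x) / (\<Sum>x\<in>S. w x))"
proof -
  define W where "W = (\<Sum>x\<in>S. w x)"
  have W0: "0 < W" unfolding W_def using S w by (intro sum_pos) auto
  define f where "f x = (if x \<in> S then w x / W else 0)" for x
  have nn: "\<And>x. 0 \<le> f x" unfolding f_def using w W0 by (auto intro: less_imp_le)
  have "(\<integral>\<^sup>+x. ennreal (f x) \<partial>count_space UNIV) = (\<Sum>x\<in>S. ennreal (f x))"
    by (rule nn_integral_count_space') (use S in \<open>auto simp: f_def\<close>)
  also have "\<dots> = ennreal (\<Sum>x\<in>S. f x)" using nn by simp
  also have "(\<Sum>x\<in>S. f x) = (\<Sum>x\<in>S. w x / W)" unfolding f_def by simp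
  also have "\<dots> = 1" using W0 by (simp add: sum_divide_distrib[symmetric] W_def)
  finally have int1: "(\<integral>\<^sup>+x. ennreal (f x) \<partial>count_space UNIV) = 1" by simp
  define \<zeta> where "\<zeta> = embed_pmf f"
  have pmf: "pmf \<zeta> x = f x" for x unfolding \<zeta>_def by (rule pmf_embed_pmf[OF nn int1])
  have set: "set_pmf \<zeta> = S" unfolding \<zeta>_def set_embed_pmf[OF nn int1]
    using w W0 by (auto simp: f_def)
  have "measure_pmf.prob \<zeta> A = (\<Sum>x\<in>S \<inter> A. w x) / W" for A
  proof -
    have "measure_pmf.prob \<zeta> A = measure_pmf.prob \<zeta> (A \<inter> set_pmf \<zeta>)"
      by (simp add: measure_Int_set_pmf)
    also have "\<dots> = (\<Sum>x\<in>A \<inter> S. pmf \<zeta> x)" unfolding set using S by (simp add: measure_measure_pmf_finite)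
    also have "\<dots> = (\<Sum>x\<in>S \<inter> A. w x / W)" unfolding pmf f_def by (intro sum.cong) auto
    finally show ?thesis by (simp add: sum_divide_distrib)
  qed
  then show ?thesis using set unfolding W_def by blast
qed

lemma heavy_point:
  fixes K :: "'p set" and T :: "'p \<Rightarrow> 'w set" and c :: real
  assumes no_mixture: "\<And>\<zeta> :: 'p pmf. finite (set_pmf \<zeta>) \<Longrightarrow> set_pmf \<zeta> \<subseteq> K \<Longrightarrow>
             \<exists>\<omega>. measure_pmf.prob \<zeta> {P \<in> K. \<omega> \<notin> T P} < 1 - c"
    and S: "finite S" "S \<noteq> {}" "S \<subseteq> K" and w: "\<forall>P\<in>S. 0 < w P"
  shows "\<exists>\<omega>. c * (\<Sum>P\<in>S. w P) < (\<Sum>P\<in>{P\<in>S. \<omega> \<in> T P}. w P)"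
proof -
  define W where "W = (\<Sum>P\<in>S. w P)"
  have W0: "0 < W" unfolding W_def using S w by (intro sum_pos) auto
  obtain \<zeta> where \<zeta>: "set_pmf \<zeta> = S" "\<And>A. measure_pmf.prob \<zeta> A = (\<Sum>P\<in>S \<inter> A. w P) / W"
    using weighted_pmf[OF S(1,2) w] unfolding W_def by blast
  obtain \<omega> where "measure_pmf.prob \<zeta> {P \<in> K. \<omega> \<notin> T P} < 1 - c"
    using no_mixture[of \<zeta>] \<zeta>(1) S by auto
  moreover have "S \<inter> {P \<in> K. \<omega> \<notin> T P} = {P\<in>S. \<omega> \<notin> T P}" using S(3) by auto
  ultimately have "(\<Sum>P\<in>{P\<in>S. \<omega> \<notin> T P}. w P) < (1 - c) * W"
    using W0 by (simp add: \<zeta>(2) divide_less_eq)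
  moreover have "W = (\<Sum>P\<in>{P\<in>S. \<omega> \<in> T P}. w P) + (\<Sum>P\<in>{P\<in>S. \<omega> \<notin> T P}. w P)"
  proof -
    have "{P\<in>S. \<omega> \<in> T P} \<union> {P\<in>S. \<omega> \<notin> T P} = S" by auto
    then show ?thesis
      unfolding W_def using sum.union_disjoint[of "{P\<in>S. \<omega> \<in> T P}" "{P\<in>S. \<omega> \<notin> T P}" w] S(1)
      by auto
  qed
  ultimately show ?thesis unfolding W_def[symmetric] by (auto simp: algebra_simps)
qed

section \<open>The path space\<close>

lemma open_nbhd_prefix:
  fixes V :: "(nat \<Rightarrow> 'x::topological_space) set"
  assumes V: "open V" "y \<in> V"
  shows "\<exists>N. \<forall>p. (\<forall>j<N. p j = y j) \<longrightarrow> p \<in> V"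
proof -
  have "openin (product_topology (\<lambda>i. euclidean) UNIV) V" using V(1) by (simp add: open_fun_def)
  then obtain U' where U': "finite {i \<in> UNIV. U' i \<noteq> topspace (euclidean :: 'x topology)}"
    "\<forall>i \<in> UNIV. openin euclidean (U' i)" "y \<in> Pi\<^sub>E UNIV U'" "Pi\<^sub>E UNIV U' \<subseteq> V"
    using V(2) unfolding openin_product_topology_alt by blast
  have "finite {i. U' i \<noteq> UNIV}" using U'(1) by simp
  then obtain N where N: "{i. U' i \<noteq> UNIV} \<subseteq> {..<N}" using finite_nat_iff_bounded by blast
  have "p \<in> V" if p: "\<forall>j<N. p j = y j" for p
  proof -
    have "p i \<in> U' i" for i
    proof (cases "U' i = UNIV")
      case False
      then have "p i = y i" using N p by auto
      moreover have "y i \<in> U' i" using U'(3) by (simp add: PiE_UNIV_domain Pi_iff)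
      ultimately show ?thesis by simp
    qed simp
    then show ?thesis using U'(4) by (auto simp: PiE_UNIV_domain)
  qed
  then show ?thesis by blast
qed

lemma admissible_sigma_algebra: "admissible_sigma \<Sigma> \<Longrightarrow> sigma_algebra UNIV \<Sigma>"
  by (simp add: admissible_sigma_def)

lemma admissible_closed:
  assumes S: "admissible_sigma \<Sigma>" and A: "closed A"
  shows "A \<in> \<Sigma>"
proof -
  interpret sigma_algebra UNIV \<Sigma> by (rule admissible_sigma_algebra[OF S])
  have "- A \<in> \<Sigma>" using A S by (simp add: admissible_sigma_def open_Compl)
  then have "UNIV - (- A) \<in> \<Sigma>" by (rule compl_sets)
  then show ?thesis by simp
qed

lemma closed_coord: "closed {p :: nat \<Rightarrow> 'x::metric_space. p j = c}"
  by (rule closed_Collect_eq) (auto intro: continuous_on_product_coordinates)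

lemma closed_cyl: "closed (cyl (\<omega> :: nat \<Rightarrow> 'x::metric_space) t)"
proof -
  have "cyl \<omega> t = (\<Inter>j\<in>{..<t}. {p. p j = \<omega> j})" by (auto simp: cyl_def)
  then show ?thesis by (simp add: closed_INT closed_coord)
qed

lemma cyl_in_cylinders: "cyl \<omega> t \<in> cylinders"
  by (auto simp: cylinders_def)

lemma UNIV_in_cylinders: "UNIV \<in> cylinders"
  using cyl_in_cylinders[of undefined 0] by (simp add: cyl_def)

section \<open>Markers and charges\<close>

definition marker :: "'x \<Rightarrow> 'x \<Rightarrow> nat \<Rightarrow> nat \<Rightarrow> (nat \<Rightarrow> 'x) set" where
  "marker a b n i = {p. p (n+i) = b \<and> p (2*n+i+1) = b \<and> (\<forall>j. n+i < j \<and> j \<noteq> 2*n+i+1 \<longrightarrow> p j = a)}"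

definition marked :: "'x \<Rightarrow> 'x \<Rightarrow> real \<Rightarrow> (nat \<Rightarrow> 'x) set" where
  "marked a b s = (\<Union>(n, i)\<in>{(n,i). i < n \<and> real i < s * real n}. marker a b n i)"

text \<open>A path in marker a b m l has its last b at position 2m+l+1 and the b before that
  at position m+l; hence it lies in at most one marker.\<close>
lemma marker_disjoint:
  assumes ab: "a \<noteq> b" and p: "p \<in> marker a b n i" "p \<in> marker a b n' i'"
  shows "n' = n \<and> i' = i"
proof -
  have tail_a: "p k = a" if "p \<in> marker a b m l" "m+l < k" "k \<noteq> 2*m+l+1" for k m l
    using that unfolding marker_def by simp
  have last_b: "k = 2*m+l+1" if "p \<in> marker a b m l" "p k = b" "2*m+l+1 \<le> k" for k m l
  proof (rule ccontr)
    assume ne: "k \<noteq> 2*m+l+1"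
    have "m+l < k" using that(3) by linarith
    then have "p k = a" using ne by (rule tail_a[OF that(1)])
    with that(2) ab show False by simp
  qed
  have prev_b: "k = m+l" if "p \<in> marker a b m l" "p k = b" "m+l \<le> k" "k < 2*m+l+1" for k m l
  proof (rule ccontr)
    assume "k \<noteq> m+l"
    then have "m+l < k" using that(3) by linarith
    moreover have "k \<noteq> 2*m+l+1" using that(4) by linarith
    ultimately have "p k = a" by (rule tail_a[OF that(1)])
    with that(2) ab show False by simp
  qed
  have b_at: "p (m+l) = b" "p (2*m+l+1) = b" if "p \<in> marker a b m l" for m l
    using that unfolding marker_def by auto
  have e1: "2*n+i+1 = 2*n'+i'+1"
    using last_b[OF p(1) b_at(2)[OF p(2)]] last_b[OF p(2) b_at(2)[OF p(1)]] by linarith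
  have "n+i = n'+i'"
    using prev_b[OF p(1) b_at(1)[OF p(2)]] prev_b[OF p(2) b_at(1)[OF p(1)]] e1 by linarith
  with e1 show ?thesis by simp
qed

lemma marked_mono: "r \<le> s \<Longrightarrow> marked a b r \<subseteq> marked a b s"
  unfolding marked_def
  by (intro UN_mono order_refl) (auto intro: order_less_le_trans mult_right_mono)

lemma marked_0: "marked a b 0 = {}"
  unfolding marked_def by auto

text \<open>Markers are closed, so the countable unions marked a b s are events.\<close>
lemma marked_in_sigma:
  fixes a b :: "'x::metric_space"
  assumes S: "admissible_sigma \<Sigma>"
  shows "marked a b s \<in> \<Sigma>"
proof -
  have "closed (marker a b n i)" for n i
  proof -
    have "marker a b n i = {p. p (n+i) = b} \<inter> {p. p (2*n+i+1) = b} \<inter>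
        (\<Inter>j\<in>{j. n+i < j \<and> j \<noteq> 2*n+i+1}. {p. p j = a})"
      by (auto simp: marker_def)
    then show ?thesis by (simp add: closed_INT closed_coord closed_Int)
  qed
  then show ?thesis unfolding marked_def
    by (intro sigma_algebra.countable_UN[OF admissible_sigma_algebra[OF S]])
       (auto intro: admissible_closed[OF S])
qed

text \<open>A charge (relative to a, b) is a finitely additive probability on all sets of
  paths that gives the slab marked a b s - marked a b r at most its length s - r and
  is carried by marked a b 1.  The slab condition is what makes charges strongly
  nonatomic.\<close>
definition charge :: "'x \<Rightarrow> 'x \<Rightarrow> ((nat \<Rightarrow> 'x) set \<Rightarrow> real) \<Rightarrow> bool" where
  "charge a b Q \<longleftrightarrow> (\<forall>E. 0 \<le> Q E) \<and> Q UNIV = 1 \<and>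
     (\<forall>A B. A \<inter> B = {} \<longrightarrow> Q (A \<union> B) = Q A + Q B) \<and>
     (\<forall>r s. 0 \<le> r \<and> r \<le> s \<and> s \<le> 1 \<longrightarrow> Q (marked a b s - marked a b r) \<le> s - r) \<and>
     Q (- marked a b 1) = 0"

context
  fixes a b :: 'x and Q :: "(nat \<Rightarrow> 'x) set \<Rightarrow> real"
  assumes Q: "charge a b Q"
begin

lemma charge_nonneg: "0 \<le> Q E"
  using Q by (simp add: charge_def)

lemma charge_UNIV: "Q UNIV = 1"
  using Q by (simp add: charge_def)

lemma charge_add: "A \<inter> B = {} \<Longrightarrow> Q (A \<union> B) = Q A + Q B"
  using Q by (simp add: charge_def)

lemma charge_slab: "0 \<le> r \<Longrightarrow> r \<le> s \<Longrightarrow> s \<le> 1 \<Longrightarrow> Q (marked a b s - marked a b r) \<le> s - r"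
  using Q by (simp add: charge_def)

lemma charge_unmarked: "Q (- marked a b 1) = 0"
  using Q by (simp add: charge_def)

lemma charge_Int_diff: "Q E = Q (E \<inter> H) + Q (E - H)"
  using charge_add[of "E \<inter> H" "E - H"] by (simp add: Int_Diff_Un Int_Diff_disjoint)

lemma charge_mono: "A \<subseteq> B \<Longrightarrow> Q A \<le> Q B"
  using charge_Int_diff[of B A] charge_nonneg[of "B - A"] by (simp add: Int_absorb1)

lemma charge_le1: "Q E \<le> 1"
  using charge_mono[of E UNIV] charge_UNIV by simp

lemma charge_null_Int:
  assumes "Q H = 0"
  shows "Q (E \<inter> H) = 0"
proof -
  have "Q (E \<inter> H) \<le> Q H" by (rule charge_mono) blast
  then show ?thesis using assms charge_nonneg[of "E \<inter> H"] by simp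
qed

lemma charge_full_Int:
  assumes "Q H = 1"
  shows "Q (E \<inter> H) = Q E"
proof -
  have "Q (UNIV - H) = 0" using charge_Int_diff[of UNIV H] charge_UNIV assms by simp
  moreover have "E \<inter> (UNIV - H) = E - H" by blast
  ultimately have "Q (E - H) = 0" using charge_null_Int[of "UNIV - H" E] by simp
  then show ?thesis using charge_Int_diff[of E H] by simp
qed

text \<open>Strong nonatomicity: the map s \<mapsto> Q (E \<inter> marked a b s) is 1-Lipschitz on [0,1] and
  runs from 0 to Q E, so it takes every intermediate value.\<close>
lemma charge_split:
  assumes al: "0 \<le> \<alpha>" "\<alpha> \<le> 1"
  shows "\<exists>s. 0 \<le> s \<and> s \<le> 1 \<and> Q (E \<inter> marked a b s) = \<alpha> * Q E"
proof -
  define f where "f s = Q (E \<inter> marked a b s)" for s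
  have dist_le: "dist (f r) (f s) \<le> dist r s" if "0 \<le> r" "r \<le> s" "s \<le> 1" for r s
  proof -
    have "E \<inter> marked a b s \<inter> (E \<inter> marked a b r) = E \<inter> marked a b r"
      using marked_mono[OF that(2), of a b] by blast
    then have "f s = f r + Q (E \<inter> marked a b s - E \<inter> marked a b r)"
      unfolding f_def using charge_Int_diff[of "E \<inter> marked a b s" "E \<inter> marked a b r"] by simp
    moreover have "Q (E \<inter> marked a b s - E \<inter> marked a b r) \<le> Q (marked a b s - marked a b r)"
      by (rule charge_mono) blast
    moreover have "Q (marked a b s - marked a b r) \<le> s - r" by (rule charge_slab[OF that])
    ultimately show ?thesis using that charge_nonneg by (simp add: dist_real_def)
  qed
  have "1-lipschitz_on {0..1} f"
  proof (intro lipschitz_onI)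
    fix x y :: real assume "x \<in> {0..1}" "y \<in> {0..1}"
    then show "dist (f x) (f y) \<le> 1 * dist x y"
      using dist_le[of x y] dist_le[of y x] by (cases "x \<le> y") (auto simp: dist_commute)
  qed simp
  then have cont: "continuous_on {0..1} f" by (rule lipschitz_on_continuous_on)
  have f0: "f 0 = 0" unfolding f_def marked_0 using charge_add[of "{}" "{}"] by simp
  have "Q (E - marked a b 1) = 0"
    using charge_null_Int[OF charge_unmarked, of E] by (simp add: Diff_eq)
  then have f1: "f 1 = Q E"
    unfolding f_def using charge_Int_diff[of E "marked a b 1"] by simp
  have "f 0 \<le> \<alpha> * Q E" "\<alpha> * Q E \<le> f 1"
    using f0 f1 al charge_nonneg[of E] by (auto simp: mult_left_le_one_le)
  then obtain s where "0 \<le> s" "s \<le> 1" "f s = \<alpha> * Q E"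
    using IVT'[of f 0 "\<alpha> * Q E" 1, OF _ _ _ cont] by auto
  then show ?thesis unfolding f_def by blast
qed

end

lemma charge_average:
  fixes Q :: "nat \<Rightarrow> (nat \<Rightarrow> 'x) set \<Rightarrow> real" and a b :: 'x
  assumes R: "R > 0" and Q: "\<And>r. r < R \<Longrightarrow> charge a b (Q r)"
  shows "charge a b (\<lambda>E. (\<Sum>r<R. Q r E) / real R)"
  unfolding charge_def
proof (intro conjI allI impI)
  fix E show "0 \<le> (\<Sum>r<R. Q r E) / real R"
    by (auto intro!: divide_nonneg_nonneg sum_nonneg charge_nonneg[OF Q])
next
  show "(\<Sum>r<R. Q r UNIV) / real R = 1"
    using charge_UNIV[OF Q] R by simp
next
  fix A B :: "(nat \<Rightarrow> 'x) set" assume "A \<inter> B = {}"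
  then show "(\<Sum>r<R. Q r (A \<union> B)) / real R = (\<Sum>r<R. Q r A) / real R + (\<Sum>r<R. Q r B) / real R"
    using charge_add[OF Q] by (simp add: sum.distrib add_divide_distrib)
next
  fix r s :: real assume rs: "0 \<le> r \<and> r \<le> s \<and> s \<le> 1"
  have "(\<Sum>k<R. Q k (marked a b s - marked a b r)) \<le> (\<Sum>k<R. s - r)"
    by (rule sum_mono) (use charge_slab[OF Q] rs in auto)
  then show "(\<Sum>k<R. Q k (marked a b s - marked a b r)) / real R \<le> s - r"
    using R by (simp add: divide_le_eq mult.commute)
next
  show "(\<Sum>r<R. Q r (- marked a b 1)) / real R = 0"
    using charge_unmarked[OF Q] by simp
qed

lemma charge_ultra_limit:
  fixes Q :: "'s \<Rightarrow> (nat \<Rightarrow> 'x) set \<Rightarrow> real" and a b :: 'x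
  assumes V: "ultra V" and Q: "\<And>S. charge a b (Q S)"
  shows "charge a b (\<lambda>E. Lim V (\<lambda>S. Q S E))"
proof -
  have tl: "((\<lambda>S. Q S E) \<longlongrightarrow> Lim V (\<lambda>S. Q S E)) V" for E
    by (rule ultra_tendsto[OF V]) (use charge_nonneg[OF Q] charge_le1[OF Q] in auto)
  note nb = ultra_nbot[OF V]
  show ?thesis
    unfolding charge_def
  proof (intro conjI allI impI)
    fix E show "0 \<le> Lim V (\<lambda>S. Q S E)"
      by (rule tendsto_lowerbound[OF tl _ nb]) (use charge_nonneg[OF Q] in auto)
  next
    show "Lim V (\<lambda>S. Q S UNIV) = 1"
      using charge_UNIV[OF Q] Lim_eqI[OF V tendsto_const] by simp
  next
    fix A B :: "(nat \<Rightarrow> 'x) set" assume AB: "A \<inter> B = {}"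
    have "((\<lambda>S. Q S (A \<union> B)) \<longlongrightarrow> Lim V (\<lambda>S. Q S A) + Lim V (\<lambda>S. Q S B)) V"
      unfolding charge_add[OF Q AB] by (rule tendsto_add[OF tl tl])
    then show "Lim V (\<lambda>S. Q S (A \<union> B)) = Lim V (\<lambda>S. Q S A) + Lim V (\<lambda>S. Q S B)"
      by (rule Lim_eqI[OF V])
  next
    fix r s :: real assume rs: "0 \<le> r \<and> r \<le> s \<and> s \<le> 1"
    show "Lim V (\<lambda>S. Q S (marked a b s - marked a b r)) \<le> s - r"
      by (rule tendsto_upperbound[OF tl _ nb]) (use charge_slab[OF Q] rs in auto)
  next
    show "Lim V (\<lambda>S. Q S (- marked a b 1)) = 0"
      using charge_unmarked[OF Q] Lim_eqI[OF V tendsto_const] by simp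
  qed
qed

text \<open>Take an ultrafilter limit
  along the finite subsets of K.\<close>
lemma charge_compactness:
  fixes W :: "'p \<Rightarrow> (nat \<Rightarrow> 'x) set" and a b :: 'x
  assumes local: "\<And>S. finite S \<Longrightarrow> S \<subseteq> K \<Longrightarrow> \<exists>Q. charge a b Q \<and> (\<forall>P\<in>S. d \<le> Q (W P))"
  shows "\<exists>Q. charge a b Q \<and> (\<forall>P\<in>K. d \<le> Q (W P))"
proof -
  define QS where
    "QS S = (SOME Q. charge a b Q \<and> (finite S \<and> S \<subseteq> K \<longrightarrow> (\<forall>P\<in>S. d \<le> Q (W P))))" for S
  have "\<exists>Q. charge a b Q \<and> (finite S \<and> S \<subseteq> K \<longrightarrow> (\<forall>P\<in>S. d \<le> Q (W P)))" for S
    using local[of S] local[of "{}"] by blast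
  then have "charge a b (QS S) \<and> (finite S \<and> S \<subseteq> K \<longrightarrow> (\<forall>P\<in>S. d \<le> QS S (W P)))" for S
    unfolding QS_def by (rule someI_ex)
  then have QS: "\<And>S. charge a b (QS S)"
    "\<And>S. finite S \<Longrightarrow> S \<subseteq> K \<Longrightarrow> \<forall>P\<in>S. d \<le> QS S (W P)"
    by blast+
  obtain V where V: "V \<le> finite_subsets_at_top K" "ultra V"
    using ultra_exists[of "finite_subsets_at_top K"] by auto
  define Q where "Q E = Lim V (\<lambda>S. QS S E)" for E
  have "d \<le> Q (W P)" if P: "P \<in> K" for P
  proof (rule tendsto_lowerbound[OF _ _ ultra_nbot[OF V(2)]])
    show "((\<lambda>S. QS S (W P)) \<longlongrightarrow> Q (W P)) V"
      unfolding Q_def by (rule ultra_tendsto[OF V(2)]) (simp add: charge_nonneg[OF QS(1)] charge_le1[OF QS(1)])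
    have "eventually (\<lambda>S. d \<le> QS S (W P)) (finite_subsets_at_top K)"
      unfolding eventually_finite_subsets_at_top using P QS(2) by (intro exI[of _ "{P}"]) auto
    then show "eventually (\<lambda>S. d \<le> QS S (W P)) V" by (rule filter_leD[OF V(1)])
  qed
  moreover have "charge a b Q" unfolding Q_def by (rule charge_ultra_limit[OF V(2) QS(1)])
  ultimately show ?thesis by blast
qed

section \<open>Point charges\<close>

definition probe :: "'x \<Rightarrow> 'x \<Rightarrow> (nat \<Rightarrow> 'x) \<Rightarrow> nat \<Rightarrow> nat \<Rightarrow> (nat \<Rightarrow> 'x)" where
  "probe a b y n i = (\<lambda>j. if j < n then y j else if j = n + i \<or> j = 2*n + i + 1 then b else a)"

definition probe_freq :: "'x \<Rightarrow> 'x \<Rightarrow> (nat \<Rightarrow> 'x) \<Rightarrow> (nat \<Rightarrow> 'x) set \<Rightarrow> nat \<Rightarrow> real" where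
  "probe_freq a b y E n = real (card {i. i < n \<and> probe a b y n i \<in> E}) / real n"

definition point_charge :: "nat filter \<Rightarrow> 'x \<Rightarrow> 'x \<Rightarrow> (nat \<Rightarrow> 'x) \<Rightarrow> (nat \<Rightarrow> 'x) set \<Rightarrow> real" where
  "point_charge U a b y E = Lim U (probe_freq a b y E)"

lemma probe_in_marked:
  assumes ab: "a \<noteq> b" and i: "i < n"
  shows "probe a b y n i \<in> marked a b s \<longleftrightarrow> real i < s * real n"
proof -
  have probe: "probe a b y n i \<in> marker a b n i"
    by (auto simp: probe_def marker_def)
  then have "probe a b y n i \<in> marker a b n' i' \<longleftrightarrow> n' = n \<and> i' = i" for n' i'
    using marker_disjoint[OF ab probe] by auto
  then show ?thesis using i by (auto simp: marked_def)
qed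

lemma probe_freq_bounds: "probe_freq a b y E n \<in> {0..1}"
proof -
  have "card {i. i < n \<and> probe a b y n i \<in> E} \<le> card {..<n}" by (rule card_mono) auto
  then show ?thesis by (cases "n = 0") (auto simp: probe_freq_def divide_le_eq_1)
qed

lemma card_slab:
  fixes r s :: real
  assumes "0 \<le> r" "r \<le> s"
  shows "real (card {i. i < n \<and> \<not> real i < r * real n \<and> real i < s * real n}) \<le> (s - r) * real n + 1"
proof -
  define m where "m = nat \<lceil>r * real n\<rceil>"
  define M where "M = nat \<lceil>s * real n\<rceil>"
  have "{i. i < n \<and> \<not> real i < r * real n \<and> real i < s * real n} \<subseteq> {m..<M}"
    unfolding m_def M_def by (auto simp: nat_le_iff ceiling_le_iff zless_nat_eq_int_zless less_ceiling_iff)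
  then have "card {i. i < n \<and> \<not> real i < r * real n \<and> real i < s * real n} \<le> M - m"
    using card_mono[of "{m..<M}"] by simp
  moreover have "real (M - m) \<le> (s - r) * real n + 1"
  proof -
    have "r * real n \<le> real m" "real M \<le> s * real n + 1" "r * real n \<le> s * real n"
      using assms unfolding m_def M_def by (simp_all add: mult_right_mono)
    then show ?thesis by (cases "m \<le> M") (auto simp: algebra_simps)
  qed
  ultimately show ?thesis by (meson of_nat_le_iff order_trans)
qed

context
  fixes U :: "nat filter"
  assumes U: "ultra U" "U \<le> sequentially"
begin

lemma point_charge_tendsto: "(probe_freq a b y E \<longlongrightarrow> point_charge U a b y E) U"
  unfolding point_charge_def by (rule ultra_tendsto[OF U(1) probe_freq_bounds])

lemma point_charge_eventually_const:
  assumes "eventually (\<lambda>n. probe_freq a b y E n = c) sequentially"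
  shows "point_charge U a b y E = c"
  unfolding point_charge_def
  by (rule Lim_eqI[OF U(1)], rule tendsto_mono[OF U(2)], rule tendsto_eventually[OF assms])

text \<open>If every path sharing the first N coordinates with y lies in V (resp. outside V),
  then V has point charge 1 (resp. 0) at y: all long enough probes lie in V (resp. not).\<close>
lemma point_charge_prefix_in:
  assumes "\<And>p. \<forall>j<N. p j = y j \<Longrightarrow> p \<in> V"
  shows "point_charge U a b y V = 1"
proof (rule point_charge_eventually_const)
  have "probe_freq a b y V n = 1" if "n \<ge> max N 1" for n
  proof -
    have "{i. i < n \<and> probe a b y n i \<in> V} = {..<n}"
      using assms that by (auto simp: probe_def)
    then show ?thesis using that by (simp add: probe_freq_def)
  qed
  then show "eventually (\<lambda>n. probe_freq a b y V n = 1) sequentially"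
    by (rule eventually_sequentiallyI)
qed

lemma point_charge_prefix_out:
  assumes "\<And>p. \<forall>j<N. p j = y j \<Longrightarrow> p \<notin> V"
  shows "point_charge U a b y V = 0"
proof (rule point_charge_eventually_const)
  have "probe_freq a b y V n = 0" if "n \<ge> N" for n
  proof -
    have "{i. i < n \<and> probe a b y n i \<in> V} = {}"
      using assms that by (auto simp: probe_def)
    then show ?thesis by (simp add: probe_freq_def)
  qed
  then show "eventually (\<lambda>n. probe_freq a b y V n = 0) sequentially"
    by (rule eventually_sequentiallyI)
qed

lemma point_charge_open:
  assumes "open V" "y \<in> V"
  shows "point_charge U a b y V = 1"
proof -
  obtain N where "\<forall>p. (\<forall>j<N. p j = y j) \<longrightarrow> p \<in> V" using open_nbhd_prefix[OF assms] by blast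
  then show ?thesis by (intro point_charge_prefix_in[of N]) auto
qed

lemma point_charge_cyl:
  "point_charge U a b y (cyl \<omega> t) = (if \<forall>i<t. y i = \<omega> i then 1 else 0)"
proof (cases "\<forall>i<t. y i = \<omega> i")
  case True
  have "point_charge U a b y (cyl \<omega> t) = 1"
    by (rule point_charge_prefix_in[of t]) (use True in \<open>auto simp: cyl_def\<close>)
  with True show ?thesis by simp
next
  case False
  have "point_charge U a b y (cyl \<omega> t) = 0"
    by (rule point_charge_prefix_out[of t]) (use False in \<open>auto simp: cyl_def\<close>)
  with False show ?thesis by simp
qed

lemma point_charge_slab:
  assumes ab: "a \<noteq> b" and rs: "0 \<le> r" "r \<le> s"
  shows "point_charge U a b y (marked a b s - marked a b r) \<le> s - r"
proof (rule tendsto_le[OF ultra_nbot[OF U(1)] _ point_charge_tendsto])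
  show "((\<lambda>n. (s - r) + 1 / real n) \<longlongrightarrow> s - r) U"
    using tendsto_mono[OF U(2) tendsto_add[OF tendsto_const lim_1_over_n]] by simp
  have "probe_freq a b y (marked a b s - marked a b r) n \<le> (s - r) + 1 / real n" if n: "n \<ge> 1" for n
  proof -
    have "{i. i < n \<and> probe a b y n i \<in> marked a b s - marked a b r} =
          {i. i < n \<and> \<not> real i < r * real n \<and> real i < s * real n}"
      using probe_in_marked[OF ab] by auto
    then have "probe_freq a b y (marked a b s - marked a b r) n \<le> ((s - r) * real n + 1) / real n"
      unfolding probe_freq_def using card_slab[OF rs] n by (simp add: divide_right_mono)
    also have "\<dots> = (s - r) + 1 / real n" using n by (simp add: field_simps)
    finally show ?thesis .
  qed
  then show "eventually (\<lambda>n. probe_freq a b y (marked a b s - marked a b r) n \<le> (s - r) + 1 / real n) U"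
    by (intro filter_leD[OF U(2)] eventually_sequentiallyI)
qed

lemma point_charge_is_charge:
  assumes ab: "a \<noteq> b"
  shows "charge a b (point_charge U a b y)"
  unfolding charge_def
proof (intro conjI allI impI)
  show "0 \<le> point_charge U a b y E" for E
    using tendsto_lowerbound[OF point_charge_tendsto _ ultra_nbot[OF U(1)]] probe_freq_bounds
    by (metis always_eventually atLeastAtMost_iff)
  show "point_charge U a b y UNIV = 1"
    by (rule point_charge_prefix_in[of 0]) simp
  show "point_charge U a b y (A \<union> B) = point_charge U a b y A + point_charge U a b y B"
    if AB: "A \<inter> B = {}" for A B
  proof -
    have "probe_freq a b y (A \<union> B) n = probe_freq a b y A n + probe_freq a b y B n" for n
    proof -
      have "{i. i < n \<and> probe a b y n i \<in> A \<union> B} =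
            {i. i < n \<and> probe a b y n i \<in> A} \<union> {i. i < n \<and> probe a b y n i \<in> B}" by auto
      then show ?thesis
        using AB by (simp add: probe_freq_def card_Un_disjoint disjoint_iff add_divide_distrib)
    qed
    then have "probe_freq a b y (A \<union> B) = (\<lambda>n. probe_freq a b y A n + probe_freq a b y B n)"
      by (rule ext)
    then have "(probe_freq a b y (A \<union> B) \<longlongrightarrow> point_charge U a b y A + point_charge U a b y B) U"
      using tendsto_add[OF point_charge_tendsto point_charge_tendsto] by simp
    then show ?thesis unfolding point_charge_def[of U a b y "A \<union> B"] by (rule Lim_eqI[OF U(1)])
  qed
  show "point_charge U a b y (marked a b s - marked a b r) \<le> s - r"
    if "0 \<le> r \<and> r \<le> s \<and> s \<le> 1" for r s
    using point_charge_slab[OF ab] that by simp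
  show "point_charge U a b y (- marked a b 1) = 0"
  proof (rule point_charge_eventually_const, rule always_eventually, rule allI)
    fix n
    have "{i. i < n \<and> probe a b y n i \<in> - marked a b 1} = {}"
      using probe_in_marked[OF ab] by auto
    then show "probe_freq a b y (- marked a b 1) n = 0" by (simp add: probe_freq_def)
  qed
qed

lemma average_point_charge_covers:
  fixes W :: "'p \<Rightarrow> (nat \<Rightarrow> 'x::topological_space) set" and om :: "nat \<Rightarrow> nat \<Rightarrow> 'x"
  assumes ab: "a \<noteq> b" and R: "R > 0" and W: "\<forall>P\<in>S. open (W P)"
    and cover: "\<forall>P\<in>S. d * real R \<le> real (card {r. r < R \<and> om r \<in> W P})"
  shows "\<exists>Q. charge a b Q \<and> (\<forall>P\<in>S. d \<le> Q (W P))"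
proof -
  define Q where "Q E = (\<Sum>r<R. point_charge U a b (om r) E) / real R" for E
  have "d \<le> Q (W P)" if P: "P \<in> S" for P
  proof -
    have "d * real R \<le> (\<Sum>r\<in>{r. r < R \<and> om r \<in> W P}. 1)" using cover P by simp
    also have "\<dots> = (\<Sum>r\<in>{r. r < R \<and> om r \<in> W P}. point_charge U a b (om r) (W P))"
      using W P by (intro sum.cong refl) (auto intro!: point_charge_open)
    also have "\<dots> \<le> (\<Sum>r<R. point_charge U a b (om r) (W P))"
      using charge_nonneg[OF point_charge_is_charge[OF ab]] by (intro sum_mono2) auto
    finally show ?thesis unfolding Q_def using R by (simp add: le_divide_eq mult.commute)
  qed
  moreover have "charge a b Q"
    unfolding Q_def by (rule charge_average[OF R point_charge_is_charge[OF ab]])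
  ultimately show ?thesis by blast
qed

end

section \<open>Extending a charge to a conditional opinion\<close>

definition cyl_base :: "'x \<Rightarrow> (nat \<Rightarrow> 'x) set \<Rightarrow> (nat \<Rightarrow> 'x)" where
  "cyl_base a H = (\<lambda>i. if (\<forall>p\<in>H. \<forall>q\<in>H. p i = q i) then (SOME p. p \<in> H) i else a)"

lemma cyl_base_cyl:
  assumes ab: "a \<noteq> b"
  shows "cyl_base a (cyl \<omega> t) = (\<lambda>i. if i < t then \<omega> i else a)"
proof (rule ext)
  fix i
  have some: "(SOME p. p \<in> cyl \<omega> t) \<in> cyl \<omega> t"
    by (rule someI[of _ \<omega>]) (simp add: cyl_def)
  have "\<not> (\<forall>p\<in>cyl \<omega> t. \<forall>q\<in>cyl \<omega> t. p i = q i)" if "\<not> i < t"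
  proof -
    have "fun_upd \<omega> i a \<in> cyl \<omega> t" "fun_upd \<omega> i b \<in> cyl \<omega> t" using that by (auto simp: cyl_def)
    moreover have "(fun_upd \<omega> i a) i \<noteq> (fun_upd \<omega> i b) i" using ab by simp
    ultimately show ?thesis by blast
  qed
  then show "cyl_base a (cyl \<omega> t) i = (if i < t then \<omega> i else a)"
    using some by (auto simp: cyl_base_def cyl_def)
qed

definition cond_charge ::
  "nat filter \<Rightarrow> 'x \<Rightarrow> 'x \<Rightarrow> ((nat \<Rightarrow> 'x) set \<Rightarrow> real) \<Rightarrow> (nat \<Rightarrow> 'x) set \<Rightarrow> (nat \<Rightarrow> 'x) set \<Rightarrow> real" where
  "cond_charge U a b P0 H E =
     (if 0 < P0 H then P0 (E \<inter> H) / P0 H else point_charge U a b (cyl_base a H) E)"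

definition extend_opinion :: "(nat \<Rightarrow> 'x) set set \<Rightarrow> nat filter \<Rightarrow> 'x \<Rightarrow> 'x \<Rightarrow>
    ((nat \<Rightarrow> 'x) set \<Rightarrow> real) \<Rightarrow> (nat \<Rightarrow> 'x) set \<Rightarrow> (nat \<Rightarrow> 'x) set \<Rightarrow> real" where
  "extend_opinion \<Sigma> U a b P0 E H = (if E \<in> \<Sigma> \<and> H \<in> cylinders then cond_charge U a b P0 H E else 0)"

context
  fixes U :: "nat filter" and a b :: "'x::metric_space" and P0 :: "(nat \<Rightarrow> 'x) set \<Rightarrow> real"
  assumes U: "ultra U" "U \<le> sequentially" and ab: "a \<noteq> b" and P0: "charge a b P0"
begin

lemmas point_charge_charge = point_charge_is_charge[OF U ab]

lemma cond_charge_bounds: "0 \<le> cond_charge U a b P0 H E \<and> cond_charge U a b P0 H E \<le> 1"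
proof (cases "0 < P0 H")
  case True
  then show ?thesis using charge_nonneg[OF P0, of "E \<inter> H"] charge_mono[OF P0, of "E \<inter> H" H]
    by (auto simp: cond_charge_def divide_le_eq_1)
next
  case False
  then show ?thesis using charge_nonneg[OF point_charge_charge] charge_le1[OF point_charge_charge]
    by (simp add: cond_charge_def)
qed

lemma cond_charge_add:
  assumes AB: "A \<inter> B = {}"
  shows "cond_charge U a b P0 H (A \<union> B) = cond_charge U a b P0 H A + cond_charge U a b P0 H B"
proof -
  have "P0 ((A \<union> B) \<inter> H) = P0 (A \<inter> H) + P0 (B \<inter> H)"
    using charge_add[OF P0, of "A \<inter> H" "B \<inter> H"] AB by (simp add: Int_Un_distrib2 disjoint_iff)
  then show ?thesis
    using charge_add[OF point_charge_charge AB] by (simp add: cond_charge_def add_divide_distrib)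
qed

lemma cond_charge_UNIV: "cond_charge U a b P0 H UNIV = 1"
  using charge_UNIV[OF point_charge_charge] by (simp add: cond_charge_def)

lemma cond_charge_self: "cond_charge U a b P0 (cyl \<omega> t) (cyl \<omega> t) = 1"
proof -
  have "\<forall>i<t. cyl_base a (cyl \<omega> t) i = \<omega> i" by (simp add: cyl_base_cyl[OF ab])
  then have "point_charge U a b (cyl_base a (cyl \<omega> t)) (cyl \<omega> t) = 1"
    by (simp add: point_charge_cyl[OF U])
  then show ?thesis by (simp add: cond_charge_def)
qed

lemma cond_charge_whole: "cond_charge U a b P0 UNIV E = P0 E"
  using charge_UNIV[OF P0] by (simp add: cond_charge_def)

text \<open>In the null case both sides are computed
  from the same point charge: refining the cylinder does not change its base as long as
  the base still lies in the refined cylinder.\<close>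
lemma cond_charge_chain:
  "cond_charge U a b P0 (cyl \<omega> t) (E \<inter> cyl \<omega> (t + n)) =
   cond_charge U a b P0 (cyl \<omega> (t + n)) E * cond_charge U a b P0 (cyl \<omega> t) (cyl \<omega> (t + n))"
proof -
  let ?H = "cyl \<omega> t" and ?H' = "cyl \<omega> (t + n)"
  have sub: "?H' \<subseteq> ?H" by (auto simp: cyl_def)
  then have Int_H: "X \<inter> ?H' \<inter> ?H = X \<inter> ?H'" "?H' \<inter> ?H = ?H'" for X by blast+
  have mono: "P0 ?H' \<le> P0 ?H" by (rule charge_mono[OF P0 sub])
  show ?thesis
  proof (cases "0 < P0 ?H'")
    case True
    then show ?thesis using mono by (simp add: cond_charge_def Int_H)
  next
    case null': False
    then have null: "P0 ?H' = 0" using charge_nonneg[OF P0, of ?H'] by simp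
    let ?y = "cyl_base a ?H"
    have restrict: "point_charge U a b ?y (E \<inter> ?H') = point_charge U a b ?y ?H' * point_charge U a b ?y E"
      using charge_full_Int[OF point_charge_charge] charge_null_Int[OF point_charge_charge]
        point_charge_cyl[OF U, of a b ?y \<omega> "t + n"] by auto
    have base: "cyl_base a ?H' = ?y" if "\<forall>i<t+n. ?y i = \<omega> i"
      using that unfolding cyl_base_cyl[OF ab] by (auto simp: fun_eq_iff)
    have "point_charge U a b ?y ?H' = 0" if "\<not> (\<forall>i<t+n. ?y i = \<omega> i)"
      using that point_charge_cyl[OF U, of a b ?y \<omega> "t + n"] by simp
    then show ?thesis
      using null null' base restrict charge_null_Int[OF P0 null, of E]
      by (cases "\<forall>i<t+n. ?y i = \<omega> i") (auto simp: cond_charge_def Int_H)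
  qed
qed

lemma extend_opinion_whole: "E \<in> \<Sigma> \<Longrightarrow> extend_opinion \<Sigma> U a b P0 E UNIV = P0 E"
  by (simp add: extend_opinion_def UNIV_in_cylinders cond_charge_whole)

lemma extend_opinion_cond_prob:
  fixes \<Sigma> :: "(nat \<Rightarrow> 'x) set set"
  assumes S: "admissible_sigma \<Sigma>"
  shows "cond_prob \<Sigma> (extend_opinion \<Sigma> U a b P0)"
proof -
  interpret sigma_algebra UNIV \<Sigma> by (rule admissible_sigma_algebra[OF S])
  have cyl_sets: "cyl \<omega> t \<in> \<Sigma>" for \<omega> t by (rule admissible_closed[OF S closed_cyl])
  have "fa_prob \<Sigma> (\<lambda>E. extend_opinion \<Sigma> U a b P0 E (cyl \<omega> t))" for \<omega> t
    unfolding fa_prob_def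
    by (auto simp: extend_opinion_def cyl_in_cylinders cond_charge_bounds cond_charge_UNIV cond_charge_add)
  moreover have "E \<inter> cyl \<omega> (t + n) \<in> \<Sigma>" if "E \<in> \<Sigma>" for E \<omega> t n
    using that cyl_sets by (rule Int)
  ultimately show ?thesis
    unfolding cond_prob_def
    by (auto simp: extend_opinion_def cyl_in_cylinders cyl_sets cond_charge_bounds
                   cond_charge_self cond_charge_chain)
qed

text \<open>The unconditional part P0 is strongly nonatomic: split E along the events
  marked a b s.\<close>
lemma extend_opinion_nonatomic:
  fixes \<Sigma> :: "(nat \<Rightarrow> 'x) set set"
  assumes S: "admissible_sigma \<Sigma>"
  shows "strongly_nonatomic \<Sigma> (\<lambda>E. extend_opinion \<Sigma> U a b P0 E UNIV)"
  unfolding strongly_nonatomic_def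
proof (intro ballI allI impI)
  interpret sigma_algebra UNIV \<Sigma> by (rule admissible_sigma_algebra[OF S])
  fix E and \<alpha> :: real assume E: "E \<in> \<Sigma>" and \<alpha>: "0 \<le> \<alpha> \<and> \<alpha> \<le> 1"
  obtain s where s: "P0 (E \<inter> marked a b s) = \<alpha> * P0 E"
    using charge_split[OF P0, of \<alpha> E] \<alpha> by auto
  have "E \<inter> marked a b s \<in> \<Sigma>" using E marked_in_sigma[OF S] by (rule Int)
  then show "\<exists>F\<in>\<Sigma>. F \<subseteq> E \<and> extend_opinion \<Sigma> U a b P0 F UNIV = \<alpha> * extend_opinion \<Sigma> U a b P0 E UNIV"
    using E s by (intro bexI[of _ "E \<inter> marked a b s"]) (auto simp: extend_opinion_whole)
qed

lemma extend_opinion_in: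
  "admissible_sigma \<Sigma> \<Longrightarrow> extend_opinion \<Sigma> U a b P0 \<in> cond_opinions \<Sigma>"
  by (simp add: cond_opinions_def extend_opinion_cond_prob extend_opinion_nonatomic)

end

theorem theorem5:
  fixes \<Sigma> :: "(nat \<Rightarrow> 'x::metric_space) set set"
    and T :: "((nat \<Rightarrow> 'x) set \<Rightarrow> (nat \<Rightarrow> 'x) set \<Rightarrow> real) \<Rightarrow> (nat \<Rightarrow> 'x) set"
    and \<epsilon> \<delta> :: real
  assumes sep: "separable_space (euclidean :: 'x topology)"
    and two: "\<exists>a b :: 'x. a \<noteq> b"
    and \<Sigma>: "admissible_sigma \<Sigma>"
    and eps: "0 \<le> \<epsilon>" "\<epsilon> < 1"
    and T_open: "\<forall>P\<in>cond_opinions \<Sigma>. open (T P)"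
    and T_level: "\<forall>P\<in>cond_opinions \<Sigma>. P (T P) UNIV \<le> \<epsilon>"
    and delta: "0 < \<delta>" "\<delta> \<le> 1 - \<epsilon>"
  shows "\<exists>\<zeta> :: ((nat \<Rightarrow> 'x) set \<Rightarrow> (nat \<Rightarrow> 'x) set \<Rightarrow> real) pmf.
           finite (set_pmf \<zeta>) \<and> set_pmf \<zeta> \<subseteq> cond_opinions \<Sigma> \<and>
           (\<forall>\<omega>. measure_pmf.prob \<zeta> {P \<in> cond_opinions \<Sigma>. \<omega> \<notin> T P} \<ge> 1 - \<epsilon> - \<delta>)"
proof (rule ccontr)
  let ?O = "cond_opinions \<Sigma>"
  assume contra: "\<not> ?thesis"
  have no_mixture: "\<exists>\<omega>. measure_pmf.prob \<zeta> {P \<in> ?O. \<omega> \<notin> T P} < 1 - (\<epsilon> + \<delta>)"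
    if "finite (set_pmf \<zeta>)" "set_pmf \<zeta> \<subseteq> ?O" for \<zeta>
    using contra that by (auto simp: not_le diff_diff_eq)
  obtain a b :: 'x where ab: "a \<noteq> b" using two by blast
  obtain U :: "nat filter" where U: "ultra U" "U \<le> sequentially"
    using ultra_exists[of sequentially] by auto
  define d where "d = \<epsilon> + \<delta> / 2"
  have d: "0 \<le> d" "d < \<epsilon> + \<delta>" "\<epsilon> + \<delta> \<le> 1" using eps delta by (auto simp: d_def)
  have local: "\<exists>Q. charge a b Q \<and> (\<forall>P\<in>S. d \<le> Q (T P))" if S: "finite S" "S \<subseteq> ?O" for S
  proof (cases "S = {}")
    case False
    obtain R om where R: "R > 0" and cover: "\<forall>P\<in>S. d * real R \<le> real (card {r. r < R \<and> om r \<in> T P})"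
      using hedge[OF S(1) False d heavy_point[OF no_mixture S(1) False S(2)]] by blast
    have "\<forall>P\<in>S. open (T P)" using T_open S(2) by blast
    then show ?thesis by (rule average_point_charge_covers[OF U ab R _ cover])
  qed (use point_charge_is_charge[OF U ab, of undefined] in auto)
  obtain P0 where P0: "charge a b P0" "\<forall>P\<in>?O. d \<le> P0 (T P)"
    using charge_compactness[of ?O a b d T, OF local] by blast
  define Ps where "Ps = extend_opinion \<Sigma> U a b P0"
  have Ps: "Ps \<in> ?O" unfolding Ps_def by (rule extend_opinion_in[OF U ab P0(1) \<Sigma>])
  then have "T Ps \<in> \<Sigma>" using T_open \<Sigma> by (simp add: admissible_sigma_def)
  then have "Ps (T Ps) UNIV = P0 (T Ps)" unfolding Ps_def by (rule extend_opinion_whole[OF U ab P0(1)])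
  moreover have "d \<le> P0 (T Ps)" using P0(2) Ps by blast
  moreover have "Ps (T Ps) UNIV \<le> \<epsilon>" using T_level Ps by blast
  ultimately show False using delta unfolding d_def by linarith
qed

end
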